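(* Consider the Rasch model and the random pairing construction described in the context, and let $d_i=\sum_{j\ne i}L_{ij}$ for $i\in[m]$. Suppose that $mp\ge2$, that $m\le n^{\alpha}$ for some constant $\alpha>0$, and that $np\ge C\kappa_2^2\log(n)$ for some sufficiently large constant $C>0$. Then with probability at least $1-2n^{-10}$, for all $i\in[m]$, \[ \frac{1}{24\kappa_2}np\le d_i\le\frac32np. \]
   Context: Rasch model. Let $n$ (users) and $m$ (items) be positive integers, $\boldsymbol\zeta^\star\in\mathbb R^n$, $\boldsymbol\theta^\star\in\mathbb R^m$ unknown parameters, and $p\in(0,1]$. Each pair $(t,i)\in[n]\times[m]$ is observed independently with probability $p$; let $\mathcal E_X$ be the observed pairs and $n_t=|\{i:(t,i)\in\mathcal E_X\}|$. For $(t,i)\in\mathcal E_X$ one observes independent binary $X_{ti}$ with $\mathbb P[X_{ti}=1]=e^{\theta_i^\star}/(e^{\zeta_t^\star}+e^{\theta_i^\star})$. Define $\kappa_2\ge1$ by $\log\kappa_2=\max_{t,i}|\zeta_t^\star-\theta_i^\star|$. Random pairing: for each user $t$, randomly (uniformly, independently across users and of the responses) split the $n_t$ items user $t$ responded to into $\lfloor n_t/2\rfloor$ disjoint unordered pairs. If $\{i,j\}$ is a selected pair for user $t$, set $L^t_{ij}=L^t_{ji}=\mathbb 1\{X_{ti}\ne X_{tj}\}$; otherwise $L^t_{ij}=0$. Let $L_{ij}=\sum_{t=1}^nL^t_{ij}$. *)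

theory Defs
  imports "HOL-Probability.Probability"
begin

text \<open>Rasch model: users t < n, items i < m. Probability that X_ti = 1.\<close>
definition rasch_prob :: "(nat \<Rightarrow> real) \<Rightarrow> (nat \<Rightarrow> real) \<Rightarrow> nat \<Rightarrow> nat \<Rightarrow> real" where
  "rasch_prob \<zeta> \<theta> t i = exp (\<theta> i) / (exp (\<zeta> t) + exp (\<theta> i))"

definition kappa2 :: "nat \<Rightarrow> nat \<Rightarrow> (nat \<Rightarrow> real) \<Rightarrow> (nat \<Rightarrow> real) \<Rightarrow> real" where
  "kappa2 n m \<zeta> \<theta> = exp (Max {\<bar>\<zeta> t - \<theta> i\<bar> | t i. t < n \<and> i < m})"

definition pairings :: "nat set \<Rightarrow> nat set set set" where
  "pairings S = {P. (\<forall>e\<in>P. e \<subseteq> S \<and> card e = 2) \<and> disjoint P \<and> card P = card S div 2}"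

text \<open>Joint law of (observation pattern E, responses X, random pairings per user).
  Responses are drawn for all pairs independently; only observed ones enter the pairing.\<close>
definition rasch_pairing_pmf ::
  "nat \<Rightarrow> nat \<Rightarrow> real \<Rightarrow> (nat \<Rightarrow> real) \<Rightarrow> (nat \<Rightarrow> real) \<Rightarrow>
   ((nat \<times> nat \<Rightarrow> bool) \<times> (nat \<times> nat \<Rightarrow> bool) \<times> (nat \<Rightarrow> nat set set)) pmf" where
  "rasch_pairing_pmf n m p \<zeta> \<theta> =
     do {
       E \<leftarrow> Pi_pmf ({..<n} \<times> {..<m}) False (\<lambda>_. bernoulli_pmf p);
       X \<leftarrow> Pi_pmf ({..<n} \<times> {..<m}) False (\<lambda>(t, i). bernoulli_pmf (rasch_prob \<zeta> \<theta> t i));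
       Pr \<leftarrow> Pi_pmf {..<n} {} (\<lambda>t. pmf_of_set (pairings {i. i < m \<and> E (t, i)}));
       return_pmf (E, X, Pr)
     }"

definition Lmat :: "nat \<Rightarrow> ((nat \<times> nat \<Rightarrow> bool) \<times> (nat \<times> nat \<Rightarrow> bool) \<times> (nat \<Rightarrow> nat set set))
    \<Rightarrow> nat \<Rightarrow> nat \<Rightarrow> nat" where
  "Lmat n \<omega> i j = (case \<omega> of (E, X, Pr) \<Rightarrow>
     (\<Sum>t<n. if {i, j} \<in> Pr t \<and> X (t, i) \<noteq> X (t, j) then 1 else 0))"

definition degree :: "nat \<Rightarrow> nat \<Rightarrow> ((nat \<times> nat \<Rightarrow> bool) \<times> (nat \<times> nat \<Rightarrow> bool) \<times> (nat \<Rightarrow> nat set set))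
    \<Rightarrow> nat \<Rightarrow> real" where
  "degree n m \<omega> i = real (\<Sum>j\<in>{..<m} - {i}. Lmat n \<omega> i j)"

end

theory Submission
  imports Defs
begin

text \<open>
  Each user contributes 0 or 1 to \<open>d\<^sub>i\<close>, independently of the other users: item \<open>i\<close> has
  at most one partner in a pairing, and the user contributes 1 exactly when \<open>i\<close> is paired
  with an item on which the user's two responses disagree. This happens with probability at
  most \<open>p\<close> (item \<open>i\<close> must be observed) and at least \<open>p / (6 \<kappa>\<^sub>2)\<close>: with probability at
  least \<open>p / 2\<close> item \<open>i\<close> and some other item are observed (because \<open>m p \<ge> 2\<close>); the random
  pairing then covers \<open>i\<close> with probability at least \<open>2 / 3\<close>, since a pairing of an odd set
  misses exactly one element and by symmetry under transpositions every element is equally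
  likely to be the missed one; and two paired responses disagree with probability at least
  \<open>1 / (2 \<kappa>\<^sub>2)\<close>. Multiplicative Chernoff bounds for the sum over the \<open>n\<close> users and a union
  bound over the \<open>m \<le> n\<^sup>\<alpha>\<close> items give the claim with \<open>C = 24 (\<alpha> + 10)\<close>.
\<close>

section \<open>Random pairings\<close>

lemma pairing_edge: "P \<in> pairings S \<Longrightarrow> e \<in> P \<Longrightarrow> e \<subseteq> S \<and> card e = 2"
  by (auto simp: pairings_def)

lemma pairing_disjoint: "P \<in> pairings S \<Longrightarrow> disjoint P"
  by (simp add: pairings_def)

lemma card_pairing: "P \<in> pairings S \<Longrightarrow> card P = card S div 2"
  by (simp add: pairings_def)

lemma finite_pairings: "finite S \<Longrightarrow> finite (pairings S)"
  by (rule finite_subset[of _ "Pow (Pow S)"]) (auto simp: pairings_def)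

lemma pairings_nonempty: "finite S \<Longrightarrow> pairings S \<noteq> {}"
proof (induction "card S" arbitrary: S rule: less_induct)
  case less
  show ?case
  proof (cases "card S < 2")
    case True
    then have "{} \<in> pairings S" by (auto simp: pairings_def)
    then show ?thesis by blast
  next
    case False
    then have "\<not> card S \<le> Suc 0"
      by simp
    then obtain a b where ab: "a \<in> S" "b \<in> S" "a \<noteq> b"
      using card_le_Suc0_iff_eq[OF less.prems] by blast
    define S' where "S' = S - {a, b}"
    have card_S': "card S' = card S - 2" and "finite S'"
      using ab less.prems by (simp_all add: S'_def card_Diff_subset)
    then obtain P' where P': "P' \<in> pairings S'"
      using less.hyps[of S'] False by fastforce
    have "finite P'"
      using P' \<open>finite S'\<close> by (auto intro: finite_subset[of _ "Pow S'"] dest: pairing_edge)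
    have avoid: "a \<notin> e \<and> b \<notin> e" if "e \<in> P'" for e
      using pairing_edge[OF P' that] by (auto simp: S'_def)
    then have "{a, b} \<notin> P'"
      by blast
    then have "card (insert {a, b} P') = card S div 2"
      using \<open>finite P'\<close> card_pairing[OF P'] card_S' False by simp
    moreover have "disjoint (insert {a, b} P')"
      using pairing_disjoint[OF P'] avoid by (auto simp: pairwise_insert disjnt_def)
    moreover have "e \<subseteq> S \<and> card e = 2" if "e \<in> insert {a, b} P'" for e
      using that ab pairing_edge[OF P'] by (auto simp: S'_def)
    ultimately have "insert {a, b} P' \<in> pairings S"
      unfolding pairings_def by blast
    then show ?thesis by blast
  qed
qed

lemma card_Union_pairing:
  assumes "P \<in> pairings S"
  shows "card (\<Union>P) = 2 * (card S div 2)" "\<Union>P \<subseteq> S"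
proof -
  have "card (\<Union>P) = (\<Sum>e\<in>P. card e)"
    using pairing_disjoint[OF assms] pairing_edge[OF assms]
    by (intro card_Union_disjoint) (auto intro: card_ge_0_finite)
  also have "\<dots> = 2 * card P"
    using pairing_edge[OF assms] by simp
  finally show "card (\<Union>P) = 2 * (card S div 2)"
    using card_pairing[OF assms] by simp
  show "\<Union>P \<subseteq> S"
    using pairing_edge[OF assms] by auto
qed

lemma pairing_partner_unique:
  assumes "P \<in> pairings S" "{i, j} \<in> P" "{i, k} \<in> P"
  shows "j = k"
proof -
  have "{i, j} = {i, k}"
    using pairwiseD[OF pairing_disjoint[OF assms(1)] assms(2,3)] by (auto simp: disjnt_def)
  moreover have "i \<noteq> j"
    using pairing_edge[OF assms(1,2)] by auto
  ultimately show ?thesis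
    by (metis doubleton_eq_iff)
qed

lemma pairing_partner_exists:
  assumes "P \<in> pairings S" "i \<in> \<Union>P"
  obtains j where "j \<in> S - {i}" "{i, j} \<in> P"
proof -
  obtain e where "e \<in> P" "i \<in> e"
    using assms(2) by blast
  moreover from this obtain j where "e = {i, j}" "j \<noteq> i"
    using pairing_edge[OF assms(1)] by (auto simp: card_2_iff)
  ultimately show thesis
    using that pairing_edge[OF assms(1)] by blast
qed

lemma sum_pairing_partners:
  assumes "P \<in> pairings S" "finite J"
  shows "(\<Sum>j\<in>J - {i}. of_bool ({i, j} \<in> P \<and> Q j) :: real) = of_bool (\<exists>j\<in>J - {i}. {i, j} \<in> P \<and> Q j)"
proof -
  define T where "T = (J - {i}) \<inter> {j. {i, j} \<in> P \<and> Q j}"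
  have "card T \<le> 1"
    using pairing_partner_unique[OF assms(1)] by (auto simp: T_def card_le_Suc0_iff_eq assms(2))
  moreover have "finite T"
    using assms(2) by (simp add: T_def)
  ultimately have "card T = of_bool (T \<noteq> {})"
    by (auto simp: le_Suc_eq)
  then show ?thesis
    using assms(2) by (auto simp: sum_of_bool_eq T_def)
qed

lemma pairings_permutes:
  assumes "\<sigma> permutes S" "P \<in> pairings S"
  shows "(`) \<sigma> ` P \<in> pairings S"
proof -
  have inj: "inj \<sigma>"
    using assms(1) by (rule permutes_inj)
  then have "inj ((`) \<sigma>)"
    by (simp add: inj_def inj_image_eq_iff)
  have "\<sigma> ` e \<subseteq> S \<and> card (\<sigma> ` e) = 2" if "e \<in> P" for e
  proof
    show "\<sigma> ` e \<subseteq> S"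
      using pairing_edge[OF assms(2) that] permutes_image[OF assms(1)] by blast
    show "card (\<sigma> ` e) = 2"
      using pairing_edge[OF assms(2) that] card_image[OF inj_on_subset[OF inj, of e]] by simp
  qed
  moreover have "disjoint ((`) \<sigma> ` P)"
  proof (rule disjointI)
    fix a b assume "a \<in> (`) \<sigma> ` P" "b \<in> (`) \<sigma> ` P" "a \<noteq> b"
    then obtain a' b' where "a' \<in> P" "b' \<in> P" "a' \<noteq> b'" "a = \<sigma> ` a'" "b = \<sigma> ` b'"
      by blast
    then have "a' \<inter> b' = {}"
      using pairing_disjoint[OF assms(2)] by (auto simp: pairwise_def disjnt_def)
    then show "a \<inter> b = {}"
      using image_Int[OF inj, of a' b'] \<open>a = \<sigma> ` a'\<close> \<open>b = \<sigma> ` b'\<close> by simp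
  qed
  moreover have "card ((`) \<sigma> ` P) = card P"
    using \<open>inj ((`) \<sigma>)\<close> by (simp add: card_image inj_on_subset)
  ultimately show ?thesis
    using card_pairing[OF assms(2)] by (auto simp: pairings_def)
qed

lemma card_pairings_avoiding:
  assumes "i \<in> S" "k \<in> S"
  shows "card {P \<in> pairings S. i \<notin> \<Union>P} = card {P \<in> pairings S. k \<notin> \<Union>P}"
proof -
  define \<tau> where "\<tau> = Transposition.transpose i k"
  define \<Phi> where "\<Phi> = (\<lambda>P. (`) \<tau> ` P)"
  have \<tau>: "\<tau> permutes S"
    using assms by (simp add: \<tau>_def permutes_swap_id)
  have \<tau>\<tau>: "\<tau> (\<tau> x) = x" for x
    by (simp add: \<tau>_def)
  have \<Phi>\<Phi>: "\<Phi> (\<Phi> P) = P" for P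
    by (simp add: \<Phi>_def image_image \<tau>\<tau>)
  have \<Phi>_pairings: "P \<in> pairings S \<Longrightarrow> \<Phi> P \<in> pairings S" for P
    unfolding \<Phi>_def by (rule pairings_permutes[OF \<tau>])
  have avoid: "k \<notin> \<Union>(\<Phi> P) \<longleftrightarrow> i \<notin> \<Union>P" for P
  proof -
    have "\<Union>(\<Phi> P) = \<tau> ` \<Union>P"
      by (auto simp: \<Phi>_def)
    moreover have "k \<in> \<tau> ` X \<longleftrightarrow> i \<in> X" for X
      by (metis \<tau>\<tau> image_iff \<tau>_def transpose_apply_second)
    ultimately show ?thesis
      by simp
  qed
  have "bij_betw \<Phi> {P \<in> pairings S. i \<notin> \<Union>P} {P \<in> pairings S. k \<notin> \<Union>P}"
  proof (rule bij_betw_byWitness[where f' = \<Phi>])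
    show "\<Phi> ` {P \<in> pairings S. i \<notin> \<Union>P} \<subseteq> {P \<in> pairings S. k \<notin> \<Union>P}"
      using \<Phi>_pairings avoid by blast
    show "\<Phi> ` {P \<in> pairings S. k \<notin> \<Union>P} \<subseteq> {P \<in> pairings S. i \<notin> \<Union>P}"
      using \<Phi>_pairings avoid[of "\<Phi> _"] by (auto simp: \<Phi>\<Phi>)
  qed (simp_all add: \<Phi>\<Phi>)
  then show ?thesis
    by (rule bij_betw_same_card)
qed

lemma card_filter_eq_sum: "finite A \<Longrightarrow> card {x \<in> A. P x} = (\<Sum>x\<in>A. if P x then 1 else 0)"
  by (simp add: sum.inter_filter[symmetric])

lemma Union_pairing_even:
  assumes "P \<in> pairings S" "finite S" "even (card S)"
  shows "\<Union>P = S"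
  using card_Union_pairing[OF assms(1)] assms(2,3) by (simp add: card_subset_eq)

lemma card_Diff_Union_pairing_odd:
  assumes "P \<in> pairings S" "finite S" "odd (card S)"
  shows "card (S - \<Union>P) = 1"
proof -
  have "card (S - \<Union>P) = card S - card (\<Union>P)"
    using card_Union_pairing(2)[OF assms(1)] assms(2) by (meson card_Diff_subset finite_subset)
  then show ?thesis
    using card_Union_pairing(1)[OF assms(1)] assms(3) by presburger
qed

lemma card_pairings_avoiding_odd:
  assumes "finite S" "i \<in> S" "odd (card S)"
  shows "card S * card {P \<in> pairings S. i \<notin> \<Union>P} = card (pairings S)"
proof -
  define N where "N k = card {P \<in> pairings S. k \<notin> \<Union>P}" for k
  have "N k = N i" if "k \<in> S" for k
    unfolding N_def by (rule card_pairings_avoiding[OF that assms(2)])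
  then have "(\<Sum>k\<in>S. N k) = (\<Sum>k\<in>S. N i)"
    by (rule sum.cong[OF refl])
  then have "card S * N i = (\<Sum>k\<in>S. N k)"
    by simp
  also have "\<dots> = (\<Sum>k\<in>S. \<Sum>P\<in>pairings S. if k \<notin> \<Union>P then 1 else 0)"
    unfolding N_def using finite_pairings[OF assms(1)] by (intro sum.cong refl card_filter_eq_sum)
  also have "\<dots> = (\<Sum>P\<in>pairings S. \<Sum>k\<in>S. if k \<notin> \<Union>P then 1 else 0)"
    by (rule sum.swap)
  also have "\<dots> = (\<Sum>P\<in>pairings S. card (S - \<Union>P))"
    using assms(1) by (intro sum.cong refl) (simp only: card_filter_eq_sum[symmetric] set_diff_eq)
  also have "\<dots> = (\<Sum>P\<in>pairings S. 1)"
    using card_Diff_Union_pairing_odd assms(1,3) by (intro sum.cong refl) auto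
  finally show ?thesis
    by (simp add: N_def)
qed

lemma prob_pairing_covers:
  assumes "finite S" "i \<in> S"
  shows "measure_pmf.prob (pmf_of_set (pairings S)) {P. i \<in> \<Union>P}
           = (if even (card S) then 1 else 1 - 1 / card S)"
proof -
  define PP where "PP = pairings S"
  define N where "N = card {P \<in> PP. i \<notin> \<Union>P}"
  have PP: "finite PP" "PP \<noteq> {}"
    using finite_pairings pairings_nonempty assms(1) unfolding PP_def by blast+
  have "measure_pmf.prob (pmf_of_set PP) {P. i \<notin> \<Union>P} = N / card PP"
    using PP by (simp add: measure_pmf_of_set N_def Int_def conj_commute)
  moreover have "UNIV - {P. i \<notin> \<Union>P} = {P. i \<in> \<Union>P}"
    by blast
  ultimately have prob: "measure_pmf.prob (pmf_of_set PP) {P. i \<in> \<Union>P} = 1 - N / card PP"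
    using measure_pmf.prob_compl[of "{P. i \<notin> \<Union>P}" "pmf_of_set PP"] by simp
  show ?thesis
  proof (cases "even (card S)")
    case True
    then have "{P \<in> PP. i \<notin> \<Union>P} = {}"
      using Union_pairing_even assms by (auto simp: PP_def)
    then have "N = 0"
      unfolding N_def by (metis card.empty)
    then show ?thesis
      using prob True by (simp add: PP_def)
  next
    case False
    then have "card S * N = card PP"
      using card_pairings_avoiding_odd[OF assms] by (simp add: N_def PP_def)
    moreover have "card S > 0" "card PP > 0"
      using assms PP card_gt_0_iff by blast+
    ultimately have "N / card PP = 1 / card S"
      by (simp add: field_simps flip: of_nat_mult)
    then show ?thesis
      using prob False by (simp add: PP_def)
  qed
qed

lemma prob_pairing_covers_ge:
  assumes "finite S" "i \<in> S" "2 \<le> card S"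
  shows "2 / 3 \<le> measure_pmf.prob (pmf_of_set (pairings S)) {P. i \<in> \<Union>P}"
proof -
  have "odd (card S) \<Longrightarrow> 1 / real (card S) \<le> 1 / 3"
    using assms(3) by (simp add: field_simps) presburger
  then show ?thesis
    using prob_pairing_covers[OF assms(1,2)] by auto
qed

section \<open>Product distributions\<close>

lemma Pi_pmf_Times:
  assumes "finite A" "finite B"
  shows "Pi_pmf (A \<times> B) d q = map_pmf case_prod (Pi_pmf A (\<lambda>_. d) (\<lambda>a. Pi_pmf B d (\<lambda>b. q (a, b))))"
    (is "_ = map_pmf case_prod ?M")
proof (rule pmf_eqI)
  fix X :: "'a \<times> 'b \<Rightarrow> 'c"
  have "inj (case_prod :: ('a \<Rightarrow> 'b \<Rightarrow> 'c) \<Rightarrow> _)"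
    by (intro injI) (metis curry_case_prod)
  then have "pmf (map_pmf case_prod ?M) X = pmf ?M (curry X)"
    using pmf_map_inj'[of case_prod _ "curry X"] by simp
  also have "\<dots> = pmf (Pi_pmf (A \<times> B) d q) X"
  proof (cases "\<forall>x. x \<notin> A \<times> B \<longrightarrow> X x = d")
    case True
    then show ?thesis
      using assms by (auto simp: pmf_Pi prod.cartesian_product fun_eq_iff intro!: prod.cong)
  next
    case False
    then obtain a b where "(a, b) \<notin> A \<times> B" "X (a, b) \<noteq> d"
      by auto
    then show ?thesis
      using assms by (cases "a \<in> A") (auto simp: pmf_Pi fun_eq_iff intro!: prod_zero)
  qed
  finally show "pmf (Pi_pmf (A \<times> B) d q) X = pmf (map_pmf case_prod ?M) X"
    by simp
qed

lemma Pi_pmf_triple: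
  assumes "finite I"
  shows "Pi_pmf I (a0, b0, c0) (\<lambda>t. A t \<bind> (\<lambda>a. B t \<bind> (\<lambda>b. C t a \<bind> (\<lambda>c. return_pmf (a, b, c)))))
    = Pi_pmf I a0 A \<bind> (\<lambda>f. Pi_pmf I b0 B \<bind> (\<lambda>g. Pi_pmf I c0 (\<lambda>t. C t (f t)) \<bind> (\<lambda>h.
        return_pmf (\<lambda>t. (f t, g t, h t)))))"
proof -
  have "Pi_pmf I (a0, b0, c0) (\<lambda>t. A t \<bind> (\<lambda>a. B t \<bind> (\<lambda>b. C t a \<bind> (\<lambda>c. return_pmf (a, b, c)))))
      = Pi_pmf I a0 A \<bind> (\<lambda>f. Pi_pmf I (a0, b0, c0) (\<lambda>t.
          B t \<bind> (\<lambda>b. C t (f t) \<bind> (\<lambda>c. return_pmf (f t, b, c)))))"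
    using assms by (rule Pi_pmf_bind)
  also have "\<dots> = Pi_pmf I a0 A \<bind> (\<lambda>f. Pi_pmf I b0 B \<bind> (\<lambda>g. Pi_pmf I (a0, b0, c0) (\<lambda>t.
          C t (f t) \<bind> (\<lambda>c. return_pmf (f t, g t, c)))))"
    using assms by (intro bind_pmf_cong refl Pi_pmf_bind)
  also have "\<dots> = Pi_pmf I a0 A \<bind> (\<lambda>f. Pi_pmf I b0 B \<bind> (\<lambda>g. Pi_pmf I c0 (\<lambda>t. C t (f t)) \<bind> (\<lambda>h.
          Pi_pmf I (a0, b0, c0) (\<lambda>t. return_pmf (f t, g t, h t)))))"
    using assms by (intro bind_pmf_cong refl Pi_pmf_bind)
  also have "\<dots> = Pi_pmf I a0 A \<bind> (\<lambda>f. Pi_pmf I b0 B \<bind> (\<lambda>g. Pi_pmf I c0 (\<lambda>t. C t (f t)) \<bind> (\<lambda>h.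
          return_pmf (\<lambda>t. (f t, g t, h t)))))"
  proof (intro bind_pmf_cong refl)
    fix f g h
    assume "f \<in> set_pmf (Pi_pmf I a0 A)" "g \<in> set_pmf (Pi_pmf I b0 B)" "h \<in> set_pmf (Pi_pmf I c0 (\<lambda>t. C t (f t)))"
    then have "f t = a0" "g t = b0" "h t = c0" if "t \<notin> I" for t
      using that by (auto dest!: set_Pi_pmf_subset[OF assms, THEN subsetD])
    then show "Pi_pmf I (a0, b0, c0) (\<lambda>t. return_pmf (f t, g t, h t)) = return_pmf (\<lambda>t. (f t, g t, h t))"
      using assms by (auto simp: fun_eq_iff)
  qed
  finally show ?thesis .
qed

lemma prob_bind_pmf_ge:
  assumes "0 \<le> c" "\<And>x. x \<in> set_pmf M \<Longrightarrow> x \<in> B \<Longrightarrow> c \<le> measure_pmf.prob (N x) A"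
  shows "c * measure_pmf.prob M B \<le> measure_pmf.prob (M \<bind> N) A"
proof -
  have "ennreal (c * measure_pmf.prob M B) = (\<integral>\<^sup>+x. ennreal c * indicator B x \<partial>M)"
    using assms(1) by (simp add: nn_integral_cmult_indicator ennreal_mult measure_pmf.emeasure_eq_measure)
  also have "\<dots> \<le> (\<integral>\<^sup>+x. emeasure (N x) A \<partial>M)"
    using assms(2) by (intro nn_integral_mono_AE AE_pmfI)
                      (auto simp: indicator_def measure_pmf.emeasure_eq_measure)
  also have "\<dots> = ennreal (measure_pmf.prob (M \<bind> N) A)"
    by (simp add: measure_pmf.emeasure_eq_measure[symmetric])
  finally show ?thesis
    by (simp add: ennreal_le_iff)
qed

lemma prob_all_ge_union_bound:
  assumes "finite I"
  shows "1 - (\<Sum>i\<in>I. measure_pmf.prob M {x. \<not> Q i x}) \<le> measure_pmf.prob M {x. \<forall>i\<in>I. Q i x}"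
proof -
  have "measure_pmf.prob M (- {x. \<forall>i\<in>I. Q i x}) = measure_pmf.prob M (\<Union>i\<in>I. {x. \<not> Q i x})"
    by (rule arg_cong[where f = "measure_pmf.prob M"]) auto
  also have "\<dots> \<le> (\<Sum>i\<in>I. measure_pmf.prob M {x. \<not> Q i x})"
    using assms by (intro measure_pmf.finite_measure_subadditive_finite) auto
  finally show ?thesis
    using measure_pmf.prob_compl[of "{x. \<forall>i\<in>I. Q i x}" M] by (simp add: Compl_eq_Diff_UNIV)
qed

lemma prob_Pi_pmf_two_coordinates:
  assumes "finite A" "i \<in> A" "j \<in> A" "i \<noteq> j"
  shows "measure_pmf.prob (Pi_pmf A d p) {x. x i \<in> U \<and> x j \<in> V}
           = measure_pmf.prob (p i) U * measure_pmf.prob (p j) V"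
proof -
  define B where "B k = (if k = i then U else if k = j then V else UNIV)" for k
  have "{x. x i \<in> U \<and> x j \<in> V} = Pi A B"
    using assms(2-4) by (auto simp: B_def Pi_def)
  then have "measure_pmf.prob (Pi_pmf A d p) {x. x i \<in> U \<and> x j \<in> V}
      = (\<Prod>k\<in>A. measure_pmf.prob (p k) (B k))"
    using measure_Pi_pmf_Pi[OF assms(1)] by simp
  also have "\<dots> = (\<Prod>k\<in>{i, j}. measure_pmf.prob (p k) (B k))"
    using assms by (intro prod.mono_neutral_right) (auto simp: B_def)
  finally show ?thesis
    using assms(4) by (simp add: B_def)
qed

lemma prob_Pi_pmf_bernoulli_coordinate:
  assumes "finite A" "i \<in> A" "0 \<le> p" "p \<le> 1"
  shows "measure_pmf.prob (Pi_pmf A False (\<lambda>_. bernoulli_pmf p)) {e. e i} = p"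
proof -
  have "measure_pmf.prob (Pi_pmf A False (\<lambda>_. bernoulli_pmf p)) {e. e i}
      = measure_pmf.prob (map_pmf (\<lambda>e. e i) (Pi_pmf A False (\<lambda>_. bernoulli_pmf p))) {True}"
    by (simp add: vimage_def)
  also have "\<dots> = p"
    using assms by (simp add: Pi_pmf_component measure_pmf_single)
  finally show ?thesis .
qed

lemma prob_Pi_pmf_bernoulli_disagree:
  assumes "finite A" "i \<in> A" "j \<in> A" "i \<noteq> j" "0 \<le> r i" "r i \<le> 1" "0 \<le> r j" "r j \<le> 1"
  shows "measure_pmf.prob (Pi_pmf A d (\<lambda>k. bernoulli_pmf (r k))) {x. x i \<noteq> x j}
           = r i * (1 - r j) + r j * (1 - r i)"
proof -
  let ?M = "Pi_pmf A d (\<lambda>k. bernoulli_pmf (r k))"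
  have "{x. x i \<noteq> x j} = {x. x i \<in> {True} \<and> x j \<in> {False}} \<union> {x. x i \<in> {False} \<and> x j \<in> {True}}"
    by auto
  then have "measure_pmf.prob ?M {x. x i \<noteq> x j}
      = measure_pmf.prob ?M {x. x i \<in> {True} \<and> x j \<in> {False}}
        + measure_pmf.prob ?M {x. x i \<in> {False} \<and> x j \<in> {True}}"
    by (simp add: measure_pmf.finite_measure_Union disjoint_iff)
  then show ?thesis
    using prob_Pi_pmf_two_coordinates[OF assms(1-4), of d "\<lambda>k. bernoulli_pmf (r k)" "{True}" "{False}"]
      prob_Pi_pmf_two_coordinates[OF assms(1-4), of d "\<lambda>k. bernoulli_pmf (r k)" "{False}" "{True}"]
      assms(5-8) by (simp add: measure_pmf_single)
qed

lemma prob_Pi_pmf_bernoulli_with_another_ge: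
  assumes "finite A" "i \<in> A" "0 \<le> p" "p \<le> 1" "2 \<le> real (card A) * p"
  shows "p / 2 \<le> measure_pmf.prob (Pi_pmf A False (\<lambda>_. bernoulli_pmf p)) {e. e i \<and> (\<exists>j\<in>A - {i}. e j)}"
proof -
  let ?M = "Pi_pmf A False (\<lambda>_. bernoulli_pmf p)"
  define B where "B k = (if k = i then {True} else {False})" for k
  have prob_B: "measure_pmf.prob ?M (Pi A B) = p * (1 - p) ^ (card A - 1)"
  proof -
    have "measure_pmf.prob ?M (Pi A B) = (\<Prod>k\<in>A. if k = i then p else 1 - p)"
      using assms by (simp add: measure_Pi_pmf_Pi B_def measure_pmf_single if_distrib cong: if_cong)
    also have "\<dots> = p * (\<Prod>k\<in>A - {i}. 1 - p)"
      using assms(1,2) by (simp add: prod.remove)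
    finally show ?thesis
      using assms(1,2) by (simp add: card_Diff_singleton)
  qed
  have "(1 - p) ^ (card A - 1) \<le> exp (- p) ^ (card A - 1)"
    using assms(4) by (intro power_mono) (auto simp: exp_ge_add_one_self[of "-p", simplified] add.commute)
  also have "\<dots> = exp (- p * real (card A - 1))"
    by (simp add: exp_of_nat_mult[symmetric] mult.commute)
  also have "\<dots> \<le> exp (- 1)"
  proof -
    have "1 \<le> card A"
      using assms(1,2) by (auto simp: Suc_le_eq card_gt_0_iff)
    then have "real (card A - 1) = real (card A) - 1"
      by (simp add: of_nat_diff)
    then show ?thesis
      using assms(4,5) by (simp add: algebra_simps)
  qed
  also have "\<dots> \<le> 1 / 2"
    using exp_ge_add_one_self[of 1] by (simp add: exp_minus field_simps)
  finally have "p * (1 - p) ^ (card A - 1) \<le> p * (1 / 2)"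
    using assms(3) by (rule mult_left_mono)
  moreover have "{e. e i \<and> (\<exists>j\<in>A - {i}. e j)} = {e. e i} - Pi A B"
    using assms(2) by (auto simp: B_def Pi_def)
  moreover have "Pi A B \<subseteq> {e. e i}"
    using assms(2) Pi_mem[of _ A B i] by (auto simp: B_def)
  ultimately show ?thesis
    using prob_B prob_Pi_pmf_bernoulli_coordinate[OF assms(1-4)] by (simp add: measure_pmf.finite_measure_Diff)
qed

section \<open>Chernoff bounds for sums of independent indicators\<close>

lemma expectation_exp_indicator_sum_le:
  fixes U :: "'i \<Rightarrow> 'a pmf" and Y :: "'a \<Rightarrow> bool"
  assumes "finite I"
  shows "measure_pmf.expectation (Pi_pmf I d U) (\<lambda>w. exp (l * (\<Sum>t\<in>I. of_bool (Y (w t)))))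
           \<le> exp ((exp l - 1) * (\<Sum>t\<in>I. measure_pmf.prob (U t) {u. Y u}))"
proof -
  define q where "q t = measure_pmf.prob (U t) {u. Y u}" for t
  have factor: "measure_pmf.expectation (U t) (\<lambda>u. exp (l * of_bool (Y u))) = 1 + (exp l - 1) * q t" for t
  proof -
    have "(\<lambda>u. exp (l * of_bool (Y u))) = (\<lambda>u. 1 + (exp l - 1) * indicator {u. Y u} u)"
      by (auto simp: fun_eq_iff)
    then show ?thesis
      by (simp add: q_def measure_pmf.emeasure_eq_measure)
  qed
  have bounded: "integrable (U t) (\<lambda>u. exp (l * of_bool (Y u)))" for t
    by (rule measure_pmf.integrable_const_bound[where B = "exp \<bar>l\<bar>"]) auto
  have "measure_pmf.expectation (Pi_pmf I d U) (\<lambda>w. exp (l * (\<Sum>t\<in>I. of_bool (Y (w t)))))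
      = measure_pmf.expectation (Pi_pmf I d U) (\<lambda>w. \<Prod>t\<in>I. exp (l * of_bool (Y (w t))))"
    by (simp only: sum_distrib_left exp_sum[OF assms])
  also have "\<dots> = (\<Prod>t\<in>I. 1 + (exp l - 1) * q t)"
    using assms bounded by (subst expectation_prod_Pi_pmf) (simp_all add: factor)
  also have "\<dots> \<le> (\<Prod>t\<in>I. exp ((exp l - 1) * q t))"
  proof (intro prod_mono conjI)
    fix t
    have "0 \<le> q t" "q t \<le> 1"
      by (simp_all add: q_def)
    moreover have "1 + (exp l - 1) * q t = (1 - q t) + q t * exp l"
      by (simp add: algebra_simps)
    ultimately show "0 \<le> 1 + (exp l - 1) * q t"
      by (metis add_nonneg_nonneg diff_ge_0_iff_ge exp_ge_zero mult_nonneg_nonneg)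
    show "1 + (exp l - 1) * q t \<le> exp ((exp l - 1) * q t)"
      by (simp add: add.commute exp_ge_add_one_self)
  qed
  also have "\<dots> = exp ((exp l - 1) * (\<Sum>t\<in>I. q t))"
    by (simp add: exp_sum sum_distrib_left assms)
  finally show ?thesis
    by (simp add: q_def)
qed

text \<open>The event is written as \<open>l * a \<le> l * S\<close> so that a negative \<open>l\<close> gives the lower tail.\<close>

lemma prob_indicator_sum_tail:
  fixes U :: "'i \<Rightarrow> 'a pmf" and Y :: "'a \<Rightarrow> bool"
  assumes "finite I"
  shows "measure_pmf.prob (Pi_pmf I d U) {w. l * a \<le> l * (\<Sum>t\<in>I. of_bool (Y (w t)))}
           \<le> exp ((exp l - 1) * (\<Sum>t\<in>I. measure_pmf.prob (U t) {u. Y u}) - l * a)"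
proof -
  let ?M = "Pi_pmf I d U" and ?S = "\<lambda>w. \<Sum>t\<in>I. of_bool (Y (w t)) :: real"
  have "integrable ?M (\<lambda>w. exp (l * ?S w))"
  proof (rule measure_pmf.integrable_const_bound[where B = "exp (\<bar>l\<bar> * card I)"])
    have "l * ?S w \<le> \<bar>l\<bar> * card I" for w
    proof -
      have "0 \<le> ?S w"
        by (simp add: sum_nonneg)
      then have "l * ?S w \<le> \<bar>l\<bar> * ?S w"
        by (intro mult_right_mono) auto
      also have "\<dots> \<le> \<bar>l\<bar> * card I"
        using sum_mono[of I "\<lambda>t. of_bool (Y (w t)) :: real" "\<lambda>_. 1"] by (intro mult_left_mono) auto
      finally show ?thesis .
    qed
    then show "AE w in ?M. norm (exp (l * ?S w)) \<le> exp (\<bar>l\<bar> * card I)"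
      by simp
  qed simp
  then have "measure_pmf.prob ?M {w. l * a \<le> l * ?S w}
      \<le> measure_pmf.expectation ?M (\<lambda>w. exp (l * ?S w)) / exp (l * a)"
    using integral_Markov_inequality_measure[of ?M "\<lambda>w. exp (l * ?S w)" UNIV "exp (l * a)"] by simp
  also have "\<dots> \<le> exp ((exp l - 1) * (\<Sum>t\<in>I. measure_pmf.prob (U t) {u. Y u})) / exp (l * a)"
    by (rule divide_right_mono[OF expectation_exp_indicator_sum_le[OF assms]]) simp
  finally show ?thesis
    by (simp add: exp_diff)
qed

lemma prob_indicator_sum_ge:
  fixes U :: "'i \<Rightarrow> 'a pmf" and Y :: "'a \<Rightarrow> bool"
  assumes "finite I" "(\<Sum>t\<in>I. measure_pmf.prob (U t) {u. Y u}) \<le> h"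
  shows "measure_pmf.prob (Pi_pmf I d U) {w. 3 / 2 * h \<le> (\<Sum>t\<in>I. of_bool (Y (w t)))} \<le> exp (- h / 16)"
proof -
  define \<mu> where "\<mu> = (\<Sum>t\<in>I. measure_pmf.prob (U t) {u. Y u})"
  have "exp (1 / 4 :: real) \<le> 1 + 1 / 4 + (1 / 4)\<^sup>2"
    by (rule exp_bound) auto
  then have "(exp (1 / 4) - 1) * \<mu> \<le> 5 / 16 * \<mu>"
    by (intro mult_right_mono) (simp_all add: \<mu>_def sum_nonneg power2_eq_square)
  then have exponent: "(exp (1 / 4) - 1) * \<mu> - 1 / 4 * (3 / 2 * h) \<le> - h / 16"
    using assms(2) by (simp add: \<mu>_def)
  have "{w. 3 / 2 * h \<le> (\<Sum>t\<in>I. of_bool (Y (w t)))}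
      = {w. 1 / 4 * (3 / 2 * h) \<le> 1 / 4 * (\<Sum>t\<in>I. of_bool (Y (w t)))}"
    by auto
  then have "measure_pmf.prob (Pi_pmf I d U) {w. 3 / 2 * h \<le> (\<Sum>t\<in>I. of_bool (Y (w t)))}
      \<le> exp ((exp (1 / 4) - 1) * \<mu> - 1 / 4 * (3 / 2 * h))"
    unfolding \<mu>_def by (simp only: prob_indicator_sum_tail[OF assms(1)])
  also have "\<dots> \<le> exp (- h / 16)"
    using exponent by simp
  finally show ?thesis .
qed

lemma prob_indicator_sum_le:
  fixes U :: "'i \<Rightarrow> 'a pmf" and Y :: "'a \<Rightarrow> bool"
  assumes "finite I" "g \<le> (\<Sum>t\<in>I. measure_pmf.prob (U t) {u. Y u})"
  shows "measure_pmf.prob (Pi_pmf I d U) {w. (\<Sum>t\<in>I. of_bool (Y (w t))) \<le> g / 4} \<le> exp (- g / 4)"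
proof -
  define \<mu> where "\<mu> = (\<Sum>t\<in>I. measure_pmf.prob (U t) {u. Y u})"
  have "exp (-1 :: real) \<le> 1 / 2"
    using exp_ge_add_one_self[of 1] by (simp add: exp_minus field_simps)
  then have "(exp (-1) - 1) * \<mu> \<le> (1 / 2 - 1) * \<mu>"
    by (intro mult_right_mono) (simp_all add: \<mu>_def sum_nonneg)
  then have exponent: "(exp (-1) - 1) * \<mu> - (-1) * (g / 4) \<le> - g / 4"
    using assms(2) by (simp add: \<mu>_def)
  have "{w. (\<Sum>t\<in>I. of_bool (Y (w t))) \<le> g / 4}
      = {w. (-1) * (g / 4) \<le> (-1) * (\<Sum>t\<in>I. of_bool (Y (w t)))}"
    by auto
  then have "measure_pmf.prob (Pi_pmf I d U) {w. (\<Sum>t\<in>I. of_bool (Y (w t))) \<le> g / 4}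
      \<le> exp ((exp (-1) - 1) * \<mu> - (-1) * (g / 4))"
    unfolding \<mu>_def by (simp only: prob_indicator_sum_tail[OF assms(1)])
  also have "\<dots> \<le> exp (- g / 4)"
    using exponent by simp
  finally show ?thesis .
qed

section \<open>Response probabilities\<close>

lemma rasch_prob_nonneg: "0 \<le> rasch_prob \<zeta> \<theta> t k"
  by (simp add: rasch_prob_def)

lemma rasch_prob_le_1: "rasch_prob \<zeta> \<theta> t k \<le> 1"
  by (simp add: rasch_prob_def add_pos_pos)

lemma abs_diff_le_ln_kappa2:
  assumes "t < n" "k < m"
  shows "\<bar>\<zeta> t - \<theta> k\<bar> \<le> ln (kappa2 n m \<zeta> \<theta>)"
proof -
  have "{\<bar>\<zeta> t - \<theta> i\<bar> | t i. t < n \<and> i < m} = (\<lambda>(t, i). \<bar>\<zeta> t - \<theta> i\<bar>) ` ({..<n} \<times> {..<m})"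
    by auto
  then show ?thesis
    using assms by (auto simp: kappa2_def intro!: Max_ge)
qed

lemma kappa2_ge_1:
  assumes "0 < n" "0 < m"
  shows "1 \<le> kappa2 n m \<zeta> \<theta>"
  using abs_diff_le_ln_kappa2[OF assms, of \<zeta> \<theta>] by (simp add: kappa2_def)

lemma rasch_prob_bounds:
  assumes "0 < \<kappa>" "\<bar>\<zeta> t - \<theta> k\<bar> \<le> ln \<kappa>"
  shows "1 / (1 + \<kappa>) \<le> rasch_prob \<zeta> \<theta> t k" "rasch_prob \<zeta> \<theta> t k \<le> \<kappa> / (1 + \<kappa>)"
proof -
  have "exp \<bar>\<zeta> t - \<theta> k\<bar> \<le> \<kappa>"
    using assms by (metis exp_le_cancel_iff exp_ln)
  moreover have "exp (\<zeta> t - \<theta> k) \<le> exp \<bar>\<zeta> t - \<theta> k\<bar>" "exp (\<theta> k - \<zeta> t) \<le> exp \<bar>\<zeta> t - \<theta> k\<bar>"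
    by simp_all
  ultimately have "exp (\<zeta> t - \<theta> k) \<le> \<kappa>" "exp (\<theta> k - \<zeta> t) \<le> \<kappa>"
    by (meson order_trans)+
  then have "exp (\<zeta> t) \<le> \<kappa> * exp (\<theta> k)" "exp (\<theta> k) \<le> \<kappa> * exp (\<zeta> t)"
    by (simp_all add: exp_diff divide_le_eq)
  then show "1 / (1 + \<kappa>) \<le> rasch_prob \<zeta> \<theta> t k" "rasch_prob \<zeta> \<theta> t k \<le> \<kappa> / (1 + \<kappa>)"
    using assms(1) by (simp_all add: rasch_prob_def field_simps add_pos_pos)
qed

lemma bernoulli_disagreement_ge:
  fixes a b \<kappa> :: real
  assumes "1 \<le> \<kappa>" "1 / (1 + \<kappa>) \<le> a" "a \<le> \<kappa> / (1 + \<kappa>)" "1 / (1 + \<kappa>) \<le> b" "b \<le> \<kappa> / (1 + \<kappa>)"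
  shows "1 / (2 * \<kappa>) \<le> a * (1 - b) + b * (1 - a)"
proof -
  define s where "s = 1 / (1 + \<kappa>)"
  have "1 - s = \<kappa> / (1 + \<kappa>)"
    using assms(1) by (simp add: s_def field_simps)
  then have "0 \<le> (a - s) * (1 - s - b) + (b - s) * (1 - s - a)"
    using assms unfolding s_def by (intro add_nonneg_nonneg mult_nonneg_nonneg) auto
  then have "2 * s * (1 - s) \<le> a * (1 - b) + b * (1 - a)"
    by (simp add: algebra_simps)
  moreover have "1 / (2 * \<kappa>) \<le> 2 * s * (1 - s)"
  proof -
    have "(1 + \<kappa>) * (1 + \<kappa>) \<le> (2 * \<kappa>) * (2 * \<kappa>)"
      using assms(1) by (intro mult_mono) auto
    then show ?thesis
      using assms(1) \<open>1 - s = \<kappa> / (1 + \<kappa>)\<close> by (simp add: s_def field_simps)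
  qed
  ultimately show ?thesis
    by linarith
qed

lemma rasch_disagreement_ge:
  assumes "t < n" "i < m" "j < m"
  shows "1 / (2 * kappa2 n m \<zeta> \<theta>)
           \<le> rasch_prob \<zeta> \<theta> t i * (1 - rasch_prob \<zeta> \<theta> t j) + rasch_prob \<zeta> \<theta> t j * (1 - rasch_prob \<zeta> \<theta> t i)"
proof -
  have "1 \<le> kappa2 n m \<zeta> \<theta>"
    using assms by (intro kappa2_ge_1) auto
  moreover note ln_bound = abs_diff_le_ln_kappa2[where \<zeta> = \<zeta> and \<theta> = \<theta>, OF assms(1)]
  ultimately show ?thesis
    using rasch_prob_bounds[where \<zeta> = \<zeta> and \<theta> = \<theta> and t = t, OF _ ln_bound[OF assms(2)]]
      rasch_prob_bounds[where \<zeta> = \<zeta> and \<theta> = \<theta> and t = t, OF _ ln_bound[OF assms(3)]]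
    by (intro bernoulli_disagreement_ge) auto
qed

section \<open>Decomposition over users\<close>

definition user_pmf ::
  "nat \<Rightarrow> real \<Rightarrow> (nat \<Rightarrow> real) \<Rightarrow> (nat \<Rightarrow> real) \<Rightarrow> nat \<Rightarrow> ((nat \<Rightarrow> bool) \<times> (nat \<Rightarrow> bool) \<times> nat set set) pmf"
  where
  "user_pmf m p \<zeta> \<theta> t = do {
     e \<leftarrow> Pi_pmf {..<m} False (\<lambda>_. bernoulli_pmf p);
     x \<leftarrow> Pi_pmf {..<m} False (\<lambda>i. bernoulli_pmf (rasch_prob \<zeta> \<theta> t i));
     P \<leftarrow> pmf_of_set (pairings {i. i < m \<and> e i});
     return_pmf (e, x, P) }"

definition combine_users ::
  "(nat \<Rightarrow> (nat \<Rightarrow> bool) \<times> (nat \<Rightarrow> bool) \<times> nat set set)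
     \<Rightarrow> (nat \<times> nat \<Rightarrow> bool) \<times> (nat \<times> nat \<Rightarrow> bool) \<times> (nat \<Rightarrow> nat set set)"
  where "combine_users w = (\<lambda>(t, i). fst (w t) i, \<lambda>(t, i). fst (snd (w t)) i, \<lambda>t. snd (snd (w t)))"

lemma rasch_pairing_pmf_conv_users:
  "rasch_pairing_pmf n m p \<zeta> \<theta>
     = map_pmf combine_users (Pi_pmf {..<n} (\<lambda>_. False, \<lambda>_. False, {}) (user_pmf m p \<zeta> \<theta>))"
proof -
  define PE where "PE = Pi_pmf {..<n} (\<lambda>_. False) (\<lambda>_. Pi_pmf {..<m} False (\<lambda>_. bernoulli_pmf p))"
  define PX where "PX = Pi_pmf {..<n} (\<lambda>_. False)
                          (\<lambda>t. Pi_pmf {..<m} False (\<lambda>i. bernoulli_pmf (rasch_prob \<zeta> \<theta> t i)))"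
  define PR where "PR = (\<lambda>E. Pi_pmf {..<n} {} (\<lambda>t. pmf_of_set (pairings {i. i < m \<and> E t i})))"
  have "rasch_pairing_pmf n m p \<zeta> \<theta>
      = PE \<bind> (\<lambda>E. PX \<bind> (\<lambda>X. PR E \<bind> (\<lambda>Pr. return_pmf (case_prod E, case_prod X, Pr))))"
    unfolding rasch_pairing_pmf_def PE_def PX_def PR_def
    by (simp add: Pi_pmf_Times bind_map_pmf)
  also have "\<dots> = map_pmf combine_users
      (PE \<bind> (\<lambda>E. PX \<bind> (\<lambda>X. PR E \<bind> (\<lambda>Pr. return_pmf (\<lambda>t. (E t, X t, Pr t))))))"
    by (simp add: map_bind_pmf combine_users_def case_prod_beta')
  also have "\<dots> = map_pmf combine_users (Pi_pmf {..<n} (\<lambda>_. False, \<lambda>_. False, {}) (user_pmf m p \<zeta> \<theta>))"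
    unfolding user_pmf_def PE_def PX_def PR_def by (subst Pi_pmf_triple) simp_all
  finally show ?thesis .
qed

text \<open>For the data \<open>u\<close> of user \<open>t\<close>, this is \<open>\<Sum>\<^sub>j L\<^sup>t\<^sub>i\<^sub>j\<close>, which is 0 or 1.\<close>

definition discordantly_paired :: "nat \<Rightarrow> nat \<Rightarrow> (nat \<Rightarrow> bool) \<times> (nat \<Rightarrow> bool) \<times> nat set set \<Rightarrow> bool"
  where "discordantly_paired m i = (\<lambda>(e, x, P). \<exists>j\<in>{..<m} - {i}. {i, j} \<in> P \<and> x i \<noteq> x j)"

lemma user_pmf_pairing:
  assumes "(e, x, P) \<in> set_pmf (user_pmf m p \<zeta> \<theta> t)"
  shows "P \<in> pairings {i. i < m \<and> e i}"
proof -
  have "finite {i. i < m \<and> e i}"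
    by simp
  then show ?thesis
    using assms finite_pairings pairings_nonempty by (auto simp: user_pmf_def)
qed

lemma degree_combine_users:
  assumes "w \<in> set_pmf (Pi_pmf {..<n} (\<lambda>_. False, \<lambda>_. False, {}) (user_pmf m p \<zeta> \<theta>))"
  shows "degree n m (combine_users w) i = (\<Sum>t<n. of_bool (discordantly_paired m i (w t)))"
proof -
  have "degree n m (combine_users w) i
      = (\<Sum>t<n. \<Sum>j\<in>{..<m} - {i}. of_bool ({i, j} \<in> snd (snd (w t)) \<and> fst (snd (w t)) i \<noteq> fst (snd (w t)) j))"
    unfolding degree_def Lmat_def combine_users_def of_bool_def[symmetric]
    by (subst sum.swap) (simp add: of_nat_sum)
  also have "\<dots> = (\<Sum>t<n. of_bool (discordantly_paired m i (w t)))"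
  proof (intro sum.cong refl)
    fix t assume "t \<in> {..<n}"
    obtain e x P where w: "w t = (e, x, P)"
      by (cases "w t")
    have "w t \<in> set_pmf (user_pmf m p \<zeta> \<theta> t)"
      using assms \<open>t \<in> {..<n}\<close> by (auto simp: set_Pi_pmf PiE_dflt_def)
    then have "P \<in> pairings {k. k < m \<and> e k}"
      using w user_pmf_pairing by simp
    then show "(\<Sum>j\<in>{..<m} - {i}. of_bool ({i, j} \<in> snd (snd (w t)) \<and> fst (snd (w t)) i \<noteq> fst (snd (w t)) j))
        = (of_bool (discordantly_paired m i (w t)) :: real)"
      unfolding w discordantly_paired_def prod.case fst_conv snd_conv
      by (rule sum_pairing_partners[OF _ finite_lessThan])
  qed
  finally show ?thesis .
qed

lemma prob_user_observes:
  assumes "i < m" "0 \<le> p" "p \<le> 1"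
  shows "measure_pmf.prob (user_pmf m p \<zeta> \<theta> t) {u. fst u i} = p"
proof -
  have "map_pmf fst (user_pmf m p \<zeta> \<theta> t) = Pi_pmf {..<m} False (\<lambda>_. bernoulli_pmf p)"
    by (simp add: user_pmf_def map_bind_pmf bind_return_pmf')
  then have "measure_pmf.prob (user_pmf m p \<zeta> \<theta> t) {u. fst u i}
      = measure_pmf.prob (Pi_pmf {..<m} False (\<lambda>_. bernoulli_pmf p)) {e. e i}"
    using measure_map_pmf[of fst "user_pmf m p \<zeta> \<theta> t" "{e. e i}"] by (simp add: vimage_def)
  then show ?thesis
    using prob_Pi_pmf_bernoulli_coordinate[of "{..<m}" i p] assms by simp
qed

lemma prob_discordantly_paired_le:
  assumes "i < m" "0 \<le> p" "p \<le> 1"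
  shows "measure_pmf.prob (user_pmf m p \<zeta> \<theta> t) {u. discordantly_paired m i u} \<le> p"
proof -
  have "fst u i" if support: "u \<in> set_pmf (user_pmf m p \<zeta> \<theta> t)"
    and paired: "discordantly_paired m i u" for u
  proof -
    obtain e x P where u: "u = (e, x, P)"
      by (cases u)
    then obtain j where "{i, j} \<in> P"
      using paired by (auto simp: discordantly_paired_def)
    moreover have "P \<in> pairings {k. k < m \<and> e k}"
      using support u user_pmf_pairing by simp
    ultimately show ?thesis
      using pairing_edge u by fastforce
  qed
  then have "measure_pmf.prob (user_pmf m p \<zeta> \<theta> t) {u. discordantly_paired m i u}
      \<le> measure_pmf.prob (user_pmf m p \<zeta> \<theta> t) {u. fst u i}"
    by (intro measure_pmf.finite_measure_mono_AE AE_pmfI) auto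
  then show ?thesis
    using prob_user_observes[OF assms] by simp
qed

lemma user_pmf_pairing_first:
  "user_pmf m p \<zeta> \<theta> t = Pi_pmf {..<m} False (\<lambda>_. bernoulli_pmf p) \<bind> (\<lambda>e.
     pmf_of_set (pairings {k. k < m \<and> e k}) \<bind> (\<lambda>P.
     map_pmf (\<lambda>x. (e, x, P)) (Pi_pmf {..<m} False (\<lambda>k. bernoulli_pmf (rasch_prob \<zeta> \<theta> t k)))))"
  unfolding user_pmf_def map_pmf_def by (subst bind_commute_pmf) (rule refl)

lemma prob_discordant_responses_ge:
  assumes "P \<in> pairings {k. k < m \<and> e k}" "i \<in> \<Union>P"
    and disagree: "\<And>j. j < m \<Longrightarrow> j \<noteq> i \<Longrightarrow>
      D \<le> rasch_prob \<zeta> \<theta> t i * (1 - rasch_prob \<zeta> \<theta> t j) + rasch_prob \<zeta> \<theta> t j * (1 - rasch_prob \<zeta> \<theta> t i)"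
  shows "D \<le> measure_pmf.prob (Pi_pmf {..<m} False (\<lambda>k. bernoulli_pmf (rasch_prob \<zeta> \<theta> t k)))
                {x. discordantly_paired m i (e, x, P)}"
proof -
  obtain j where j: "j \<in> {k. k < m \<and> e k} - {i}" "{i, j} \<in> P"
    by (rule pairing_partner_exists[OF assms(1,2)])
  moreover have "i < m"
    using assms(1,2) pairing_edge by blast
  ultimately have "D \<le> measure_pmf.prob (Pi_pmf {..<m} False (\<lambda>k. bernoulli_pmf (rasch_prob \<zeta> \<theta> t k)))
      {x. x i \<noteq> x j}"
    using disagree[of j] by (subst prob_Pi_pmf_bernoulli_disagree) (auto simp: rasch_prob_nonneg rasch_prob_le_1)
  also have "\<dots> \<le> measure_pmf.prob (Pi_pmf {..<m} False (\<lambda>k. bernoulli_pmf (rasch_prob \<zeta> \<theta> t k)))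
      {x. discordantly_paired m i (e, x, P)}"
    using j by (intro measure_pmf.finite_measure_mono) (auto simp: discordantly_paired_def)
  finally show ?thesis .
qed

lemma prob_discordantly_paired_ge:
  assumes "i < m" "0 \<le> p" "p \<le> 1" "2 \<le> real m * p" "0 \<le> D"
    and disagree: "\<And>j. j < m \<Longrightarrow> j \<noteq> i \<Longrightarrow>
      D \<le> rasch_prob \<zeta> \<theta> t i * (1 - rasch_prob \<zeta> \<theta> t j) + rasch_prob \<zeta> \<theta> t j * (1 - rasch_prob \<zeta> \<theta> t i)"
  shows "D * p / 3 \<le> measure_pmf.prob (user_pmf m p \<zeta> \<theta> t) {u. discordantly_paired m i u}"
proof -
  define X where "X = Pi_pmf {..<m} False (\<lambda>k. bernoulli_pmf (rasch_prob \<zeta> \<theta> t k))"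
  define S where "S e = {k. k < m \<and> e k}" for e :: "nat \<Rightarrow> bool"
  have covered: "D * (2 / 3) \<le> measure_pmf.prob
      (pmf_of_set (pairings (S e)) \<bind> (\<lambda>P. map_pmf (\<lambda>x. (e, x, P)) X)) {u. discordantly_paired m i u}"
    if observed: "e \<in> {e. e i \<and> (\<exists>j\<in>{..<m} - {i}. e j)}" for e
  proof -
    obtain j where "j \<in> {..<m} - {i}" "e j" "e i"
      using observed by blast
    then have "{i, j} \<subseteq> S e"
      using assms(1) by (auto simp: S_def)
    then have "2 \<le> card (S e)"
      using \<open>j \<in> {..<m} - {i}\<close> card_mono[of "S e" "{i, j}"] by (auto simp: S_def)
    then have "2 / 3 \<le> measure_pmf.prob (pmf_of_set (pairings (S e))) {P. i \<in> \<Union>P}"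
      using \<open>{i, j} \<subseteq> S e\<close> by (intro prob_pairing_covers_ge) (auto simp: S_def)
    then have "D * (2 / 3) \<le> D * measure_pmf.prob (pmf_of_set (pairings (S e))) {P. i \<in> \<Union>P}"
      using assms(5) by (rule mult_left_mono)
    also have "\<dots> \<le> measure_pmf.prob
        (pmf_of_set (pairings (S e)) \<bind> (\<lambda>P. map_pmf (\<lambda>x. (e, x, P)) X)) {u. discordantly_paired m i u}"
      using prob_discordant_responses_ge[OF _ _ disagree] finite_pairings pairings_nonempty assms(5)
      by (intro prob_bind_pmf_ge) (auto simp: S_def X_def vimage_def)
    finally show ?thesis .
  qed
  have "D * p / 3 = D * (2 / 3) * (p / 2)"
    by simp
  also have "\<dots> \<le> D * (2 / 3) * measure_pmf.prob (Pi_pmf {..<m} False (\<lambda>_. bernoulli_pmf p))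
                                {e. e i \<and> (\<exists>j\<in>{..<m} - {i}. e j)}"
    using prob_Pi_pmf_bernoulli_with_another_ge[of "{..<m}" i p] assms by (intro mult_left_mono) auto
  also have "\<dots> \<le> measure_pmf.prob (user_pmf m p \<zeta> \<theta> t) {u. discordantly_paired m i u}"
    unfolding user_pmf_pairing_first using covered assms(5)
    by (intro prob_bind_pmf_ge) (auto simp: S_def X_def)
  finally show ?thesis .
qed

section \<open>Concentration of the degrees\<close>

lemma exp_neg_div_le_powr:
  fixes x y \<kappa> c :: real
  assumes "1 \<le> x" "1 \<le> \<kappa>" "0 \<le> c" "24 * c * \<kappa>\<^sup>2 * ln x \<le> y"
  shows "exp (- (y / (24 * \<kappa>))) \<le> x powr (- c)"
proof -
  have "c * 1 \<le> c * \<kappa>"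
    using assms(2,3) by (rule mult_left_mono)
  then have "24 * \<kappa> * (c * ln x) \<le> 24 * \<kappa> * (c * \<kappa> * ln x)"
    using assms(1,2) by (intro mult_left_mono mult_right_mono) auto
  also have "\<dots> \<le> y"
    using assms(4) by (simp add: power2_eq_square algebra_simps)
  finally have "c * ln x \<le> y / (24 * \<kappa>)"
    using assms(2) by (simp add: field_simps)
  then show ?thesis
    using assms(1) by (simp add: powr_def)
qed

lemma sum_prob_discordantly_paired_bounds:
  assumes "0 < n" "i < m" "0 \<le> p" "p \<le> 1" "2 \<le> real m * p"
  shows "real n * p / (6 * kappa2 n m \<zeta> \<theta>)
           \<le> (\<Sum>t<n. measure_pmf.prob (user_pmf m p \<zeta> \<theta> t) {u. discordantly_paired m i u})"
    and "(\<Sum>t<n. measure_pmf.prob (user_pmf m p \<zeta> \<theta> t) {u. discordantly_paired m i u}) \<le> real n * p"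
proof -
  have "1 \<le> kappa2 n m \<zeta> \<theta>"
    using assms(1,2) by (intro kappa2_ge_1) auto
  have "real n * p / (6 * kappa2 n m \<zeta> \<theta>) = (\<Sum>t<n. 1 / (2 * kappa2 n m \<zeta> \<theta>) * p / 3)"
    by simp
  also have "\<dots> \<le> (\<Sum>t<n. measure_pmf.prob (user_pmf m p \<zeta> \<theta> t) {u. discordantly_paired m i u})"
    using assms(2-5) \<open>1 \<le> kappa2 n m \<zeta> \<theta>\<close>
    by (intro sum_mono prob_discordantly_paired_ge rasch_disagreement_ge) auto
  finally show "real n * p / (6 * kappa2 n m \<zeta> \<theta>)
      \<le> (\<Sum>t<n. measure_pmf.prob (user_pmf m p \<zeta> \<theta> t) {u. discordantly_paired m i u})" .
  show "(\<Sum>t<n. measure_pmf.prob (user_pmf m p \<zeta> \<theta> t) {u. discordantly_paired m i u}) \<le> real n * p"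
    using sum_mono[of "{..<n}" "\<lambda>t. measure_pmf.prob (user_pmf m p \<zeta> \<theta> t) {u. discordantly_paired m i u}" "\<lambda>_. p"]
      prob_discordantly_paired_le[OF assms(2-4)] by simp
qed

lemma prob_degree_outside:
  fixes \<zeta> \<theta> :: "nat \<Rightarrow> real"
  assumes "0 < n" "i < m" "0 \<le> p" "p \<le> 1" "2 \<le> real m * p"
  defines "\<kappa> \<equiv> kappa2 n m \<zeta> \<theta>"
  shows "measure_pmf.prob (rasch_pairing_pmf n m p \<zeta> \<theta>)
           {\<omega>. \<not> (real n * p / (24 * \<kappa>) \<le> degree n m \<omega> i \<and> degree n m \<omega> i \<le> 3 / 2 * real n * p)}
         \<le> 2 * exp (- (real n * p / (24 * \<kappa>)))"
proof -
  define U where "U = user_pmf m p \<zeta> \<theta>"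
  define W where "W = Pi_pmf {..<n} (\<lambda>_. False, \<lambda>_. False, {}) U"
  define Y where "Y = discordantly_paired m i"
  define S where "S w = (\<Sum>t<n. of_bool (Y (w t)) :: real)" for w
  define \<mu> where "\<mu> = (\<Sum>t<n. measure_pmf.prob (U t) {u. Y u})"
  have "1 \<le> \<kappa>"
    using assms(1,2) unfolding \<kappa>_def by (intro kappa2_ge_1) auto
  have "real n * p / (6 * \<kappa>) \<le> \<mu>" "\<mu> \<le> real n * p"
    using sum_prob_discordantly_paired_bounds[OF assms(1-5)] by (simp_all add: \<mu>_def U_def Y_def \<kappa>_def)
  have degree: "degree n m (combine_users w) i = S w" if "w \<in> set_pmf W" for w
    using degree_combine_users that unfolding S_def Y_def W_def U_def .
  have "measure_pmf.prob (rasch_pairing_pmf n m p \<zeta> \<theta>)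
      {\<omega>. \<not> (real n * p / (24 * \<kappa>) \<le> degree n m \<omega> i \<and> degree n m \<omega> i \<le> 3 / 2 * real n * p)}
    \<le> measure_pmf.prob W ({w. S w \<le> (real n * p / (6 * \<kappa>)) / 4} \<union> {w. 3 / 2 * (real n * p) \<le> S w})"
    unfolding rasch_pairing_pmf_conv_users W_def[symmetric] U_def[symmetric] measure_map_pmf
    using degree by (intro measure_pmf.finite_measure_mono_AE AE_pmfI) auto
  also have "\<dots> \<le> measure_pmf.prob W {w. S w \<le> (real n * p / (6 * \<kappa>)) / 4}
                  + measure_pmf.prob W {w. 3 / 2 * (real n * p) \<le> S w}"
    by (rule measure_Un_le) auto
  also have "\<dots> \<le> exp (- (real n * p / (6 * \<kappa>)) / 4) + exp (- (real n * p) / 16)"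
    using prob_indicator_sum_le[of "{..<n}" "real n * p / (6 * \<kappa>)" U Y]
      prob_indicator_sum_ge[of "{..<n}" U Y "real n * p"] \<open>\<mu> \<le> real n * p\<close> \<open>real n * p / (6 * \<kappa>) \<le> \<mu>\<close>
    unfolding S_def W_def \<mu>_def by (intro add_mono) auto
  also have "\<dots> \<le> 2 * exp (- (real n * p / (24 * \<kappa>)))"
  proof -
    have "real n * p / (24 * \<kappa>) \<le> real n * p / 16"
      using \<open>1 \<le> \<kappa>\<close> assms(3) by (intro divide_left_mono) auto
    then show ?thesis
      by (simp add: field_simps)
  qed
  finally show ?thesis .
qed

theorem lemma2:
  fixes \<alpha> :: real
  assumes "\<alpha> > 0"
  shows "\<exists>C>0. \<forall>(n::nat) (m::nat) (p::real) (\<zeta>::nat \<Rightarrow> real) (\<theta>::nat \<Rightarrow> real).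
     n \<ge> 1 \<longrightarrow> 0 < p \<longrightarrow> p \<le> 1 \<longrightarrow> real m * p \<ge> 2 \<longrightarrow> real m \<le> real n powr \<alpha> \<longrightarrow>
     real n * p \<ge> C * (kappa2 n m \<zeta> \<theta>)\<^sup>2 * ln (real n) \<longrightarrow>
     measure_pmf.prob (rasch_pairing_pmf n m p \<zeta> \<theta>)
       {\<omega>. \<forall>i<m. real n * p / (24 * kappa2 n m \<zeta> \<theta>) \<le> degree n m \<omega> i
                 \<and> degree n m \<omega> i \<le> 3 / 2 * real n * p}
     \<ge> 1 - 2 * real n powr (-10)"
proof (intro exI[of _ "24 * (\<alpha> + 10)"] conjI allI impI)
  fix n m :: nat and p :: real and \<zeta> \<theta> :: "nat \<Rightarrow> real"
  assume n: "n \<ge> 1" and p: "0 < p" "p \<le> 1" and mp: "real m * p \<ge> 2" and m: "real m \<le> real n powr \<alpha>"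
    and np: "real n * p \<ge> 24 * (\<alpha> + 10) * (kappa2 n m \<zeta> \<theta>)\<^sup>2 * ln (real n)"
  define \<kappa> where "\<kappa> = kappa2 n m \<zeta> \<theta>"
  have "0 < m"
    using mp by (cases m) auto
  then have "1 \<le> \<kappa>"
    using n unfolding \<kappa>_def by (intro kappa2_ge_1) auto
  then have tail: "exp (- (real n * p / (24 * \<kappa>))) \<le> real n powr (- (\<alpha> + 10))"
    using n np assms by (intro exp_neg_div_le_powr) (auto simp: \<kappa>_def)
  have "1 - 2 * real n powr (-10) = 1 - 2 * (real n powr \<alpha> * real n powr (- (\<alpha> + 10)))"
    using n by (simp add: powr_add[symmetric])
  also have "\<dots> \<le> 1 - (\<Sum>i<m. 2 * real n powr (- (\<alpha> + 10)))"
    using m by (simp add: mult_right_mono)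
  also have "\<dots> \<le> 1 - (\<Sum>i<m. measure_pmf.prob (rasch_pairing_pmf n m p \<zeta> \<theta>)
      {\<omega>. \<not> (real n * p / (24 * \<kappa>) \<le> degree n m \<omega> i \<and> degree n m \<omega> i \<le> 3 / 2 * real n * p)})"
    using prob_degree_outside[of n _ m p \<zeta> \<theta>] tail n p mp
    by (intro diff_left_mono sum_mono order_trans[OF _ mult_left_mono[OF tail]]) (auto simp: \<kappa>_def)
  also have "\<dots> \<le> measure_pmf.prob (rasch_pairing_pmf n m p \<zeta> \<theta>)
      {\<omega>. \<forall>i\<in>{..<m}. real n * p / (24 * \<kappa>) \<le> degree n m \<omega> i \<and> degree n m \<omega> i \<le> 3 / 2 * real n * p}"
    by (rule prob_all_ge_union_bound) simp
  finally show "measure_pmf.prob (rasch_pairing_pmf n m p \<zeta> \<theta>)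
      {\<omega>. \<forall>i<m. real n * p / (24 * kappa2 n m \<zeta> \<theta>) \<le> degree n m \<omega> i \<and> degree n m \<omega> i \<le> 3 / 2 * real n * p}
    \<ge> 1 - 2 * real n powr (-10)"
    by (simp add: \<kappa>_def Ball_def)
qed (use assms in simp)

end
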